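(* Let $p$ be an odd prime, $P$ a finite $p$-group, $N$ a normal subgroup of $P$, and $j\ge 1$ an integer. If $\operatorname{pwh}_P(N)\le j$, then $[N,{}_jP]\le N^p$.
   Context: For a finite $p$-group $P$, a normal subgroup $N$ of $P$ is powerfully embedded in $P$ if $[N,P]\le N^p$ when $p$ is odd, and $[N,P]\le N^4$ when $p=2$ (here $N^{k}$ denotes the subgroup generated by all $k$-th powers of elements of $N$). An $\eta$-series of $P$ is an ascending series $1=N_0\le N_1\le N_2\le\cdots$ of normal subgroups of $P$ such that $N_{i+1}/N_i$ is powerfully embedded in $P/N_i$ for all $i$. For $N\trianglelefteq P$, the powerful height $\operatorname{pwh}_P(N)$ is the smallest $k$ such that there is an $\eta$-series with $N_k=N$. $[N,{}_jP]$ denotes $[N,P,\ldots,P]$ with $j$ copies of $P$, defined recursively by $[N,{}_1P]=[N,P]$ and $[N,{}_{j+1}P]=[[N,{}_jP],P]$. *)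

theory Defs
  imports "HOL-Algebra.Algebra"
begin

definition comm_sub :: "('a, 'b) monoid_scheme \<Rightarrow> 'a set \<Rightarrow> 'a set \<Rightarrow> 'a set" where
  "comm_sub G A B = generate G {inv\<^bsub>G\<^esub> a \<otimes>\<^bsub>G\<^esub> inv\<^bsub>G\<^esub> b \<otimes>\<^bsub>G\<^esub> a \<otimes>\<^bsub>G\<^esub> b | a b. a \<in> A \<and> b \<in> B}"

definition power_sub :: "('a, 'b) monoid_scheme \<Rightarrow> nat \<Rightarrow> 'a set \<Rightarrow> 'a set" where
  "power_sub G k N = generate G {x [^]\<^bsub>G\<^esub> k | x. x \<in> N}"

fun comm_iter :: "('a, 'b) monoid_scheme \<Rightarrow> 'a set \<Rightarrow> nat \<Rightarrow> 'a set" where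
  "comm_iter G N 0 = N"
| "comm_iter G N (Suc j) = comm_sub G (comm_iter G N j) (carrier G)"

definition finite_p_group :: "('a, 'b) monoid_scheme \<Rightarrow> nat \<Rightarrow> bool" where
  "finite_p_group G p \<longleftrightarrow> group G \<and> finite (carrier G) \<and> (\<exists>n. card (carrier G) = p ^ n)"

definition powerfully_embedded :: "('a, 'b) monoid_scheme \<Rightarrow> nat \<Rightarrow> 'a set \<Rightarrow> bool" where
  "powerfully_embedded G p N \<longleftrightarrow> N \<lhd> G \<and>
     comm_sub G N (carrier G) \<subseteq> power_sub G (if p = 2 then 4 else p) N"

definition eta_series :: "('a, 'b) monoid_scheme \<Rightarrow> nat \<Rightarrow> (nat \<Rightarrow> 'a set) \<Rightarrow> bool" where
  "eta_series G p Ns \<longleftrightarrow> Ns 0 = {\<one>\<^bsub>G\<^esub>} \<and>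
     (\<forall>i. Ns i \<lhd> G \<and> Ns i \<subseteq> Ns (Suc i) \<and>
          powerfully_embedded (G Mod (Ns i)) p ((\<lambda>x. Ns i #>\<^bsub>G\<^esub> x) ` Ns (Suc i)))"

definition pwh :: "('a, 'b) monoid_scheme \<Rightarrow> nat \<Rightarrow> 'a set \<Rightarrow> nat" where
  "pwh G p N = (LEAST k. \<exists>Ns. eta_series G p Ns \<and> Ns k = N)"

end

theory Submission
  imports Defs
begin

(* Let N = N_k in an eta-series and put M_i = N_i N^p. Powerful embedding of N_(i+1)/N_i
   in P/N_i gives [N_(i+1), P] <= N_i N_(i+1)^p <= M_i; since N^p is normal and
   [vu, b] = [v, b]^u [u, b], even [M_(i+1), P] <= M_i. Descending from N <= M_k to
   M_0 = N^p yields [N, _k P] <= N^p, and normality of N^p absorbs the remaining j - k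
   commutators. *)

abbreviation commutator :: "('a, 'b) monoid_scheme \<Rightarrow> 'a \<Rightarrow> 'a \<Rightarrow> 'a" where
  "commutator G a b \<equiv> inv\<^bsub>G\<^esub> a \<otimes>\<^bsub>G\<^esub> inv\<^bsub>G\<^esub> b \<otimes>\<^bsub>G\<^esub> a \<otimes>\<^bsub>G\<^esub> b"

lemma (in group) commutator_mult_left:
  assumes "v \<in> carrier G" "u \<in> carrier G" "b \<in> carrier G"
  shows "commutator G (v \<otimes> u) b = inv u \<otimes> commutator G v b \<otimes> u \<otimes> commutator G u b"
proof -
  have cancel: "x \<otimes> (inv x \<otimes> y) = y" if "x \<in> carrier G" "y \<in> carrier G" for x y
    using that by (simp flip: m_assoc)
  show ?thesis
    using assms by (simp add: m_assoc inv_mult_group cancel)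
qed

lemma (in normal) commutator_closed:
  assumes "a \<in> H" "b \<in> carrier G"
  shows "commutator G a b \<in> H"
proof -
  have "inv a \<otimes> (inv b \<otimes> a \<otimes> b) \<in> H"
    using assms inv_op_closed1 by simp
  with assms show ?thesis by (simp add: m_assoc)
qed

lemma (in group) comm_sub_subset:
  assumes "subgroup Q G" and "\<And>a b. a \<in> A \<Longrightarrow> b \<in> B \<Longrightarrow> commutator G a b \<in> Q"
  shows "comm_sub G A B \<subseteq> Q"
  unfolding comm_sub_def using assms by (intro generate_subgroup_incl) blast+

lemma (in normal) comm_iter_subset:
  assumes "comm_iter G N m \<subseteq> H"
  shows "comm_iter G N (m + d) \<subseteq> H"
proof (induction d)
  case (Suc d)
  then show ?case
    by (simp, intro comm_sub_subset subgroup_axioms) (auto intro: commutator_closed)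
qed (simp add: assms)

lemma (in group) nat_pow_conj:
  assumes "g \<in> carrier G" "x \<in> carrier G"
  shows "g \<otimes> x [^] (n::nat) \<otimes> inv g = (g \<otimes> x \<otimes> inv g) [^] n"
proof (induction n)
  case (Suc n)
  have cancel: "inv g \<otimes> (g \<otimes> y) = y" if "y \<in> carrier G" for y
    using that assms by (simp flip: m_assoc)
  have "g \<otimes> x [^] Suc n \<otimes> inv g = (g \<otimes> x [^] n \<otimes> inv g) \<otimes> (g \<otimes> x \<otimes> inv g)"
    using assms by (simp add: m_assoc cancel)
  with Suc show ?case by simp
qed (use assms in simp)

lemma (in group) power_sub_mono: "A \<subseteq> B \<Longrightarrow> power_sub G p A \<subseteq> power_sub G p B"
  unfolding power_sub_def by (rule mono_generate) blast

lemma (in normal) power_sub_normal: "power_sub G p H \<lhd> G"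
  unfolding power_sub_def
proof (rule normal_generateI)
  show "{x [^] p | x. x \<in> H} \<subseteq> carrier G" by auto
  fix y g assume "y \<in> {x [^] p | x. x \<in> H}" "g \<in> carrier G"
  then obtain x where "x \<in> H" "y = x [^] p" by blast
  with \<open>g \<in> carrier G\<close> show "g \<otimes> y \<otimes> inv g \<in> {x [^] p | x. x \<in> H}"
    using nat_pow_conj inv_op_closed2 by auto
qed

lemma (in group_hom) image_power_sub:
  assumes "K \<subseteq> carrier G"
  shows "h ` power_sub G p K = power_sub H p (h ` K)"
proof -
  have "{y [^]\<^bsub>H\<^esub> p | y. y \<in> h ` K} = h ` {x [^]\<^bsub>G\<^esub> p | x. x \<in> K}"
    using assms by (force simp: hom_nat_pow)
  moreover have "{x [^]\<^bsub>G\<^esub> p | x. x \<in> K} \<subseteq> carrier G"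
    using assms by blast
  ultimately show ?thesis
    unfolding power_sub_def by (simp add: generate_img)
qed

lemma (in group) subset_set_mult_left:
  assumes "\<one> \<in> H" "S \<subseteq> carrier G"
  shows "S \<subseteq> H <#> S"
proof -
  have "S = {\<one>} <#> S"
    using assms(2) by (simp flip: l_coset_eq_set_mult add: lcos_mult_one)
  also have "\<dots> \<subseteq> H <#> S"
    using assms(1) by (intro mono_set_mult) auto
  finally show ?thesis .
qed

lemma (in group) subset_set_mult_right:
  assumes "\<one> \<in> H" "S \<subseteq> carrier G"
  shows "S \<subseteq> S <#> H"
proof -
  have "S = S <#> {\<one>}"
    using assms(2) by (simp flip: r_coset_eq_set_mult)
  also have "\<dots> \<subseteq> S <#> H"
    using assms(1) by (intro mono_set_mult) auto
  finally show ?thesis .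
qed

lemma (in normal) commutator_mem_of_powerfully_embedded:
  assumes "K \<subseteq> carrier G"
    and pe: "powerfully_embedded (G Mod H) p ((#>) H ` K)" and "p \<noteq> 2"
    and "v \<in> K" "b \<in> carrier G"
  shows "commutator G v b \<in> H <#> power_sub G p K"
proof -
  interpret quot: group "G Mod H" by (rule factorgroup_is_group)
  interpret \<pi>: group_hom G "G Mod H" "(#>) H" by unfold_locales (rule r_coset_hom_Mod)
  have v: "v \<in> carrier G" using assms(1,4) by blast
  have "H #> commutator G v b = commutator (G Mod H) (H #> v) (H #> b)"
    using v \<open>b \<in> carrier G\<close> by (simp add: \<pi>.hom_mult \<pi>.hom_inv)
  also have "\<dots> \<in> comm_sub (G Mod H) ((#>) H ` K) (carrier (G Mod H))"
    unfolding comm_sub_def using \<open>v \<in> K\<close> \<open>b \<in> carrier G\<close> \<pi>.hom_closed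
    by (intro generate.incl) blast
  also have "\<dots> \<subseteq> power_sub (G Mod H) p ((#>) H ` K)"
    using pe \<open>p \<noteq> 2\<close> unfolding powerfully_embedded_def by simp
  also have "\<dots> = (#>) H ` power_sub G p K"
    using \<pi>.image_power_sub[OF assms(1)] by simp
  finally obtain y where y: "y \<in> power_sub G p K" "H #> commutator G v b = H #> y"
    by blast
  have "commutator G v b \<in> H #> y"
    unfolding y(2)[symmetric] using v \<open>b \<in> carrier G\<close> by (intro rcos_self subgroup_axioms) simp
  also have "\<dots> = H <#> {y}"
    by (rule r_coset_eq_set_mult)
  also have "\<dots> \<subseteq> H <#> power_sub G p K"
    using y(1) by (intro mono_set_mult) auto
  finally show ?thesis .
qed

lemma eta_series_mono:
  assumes "eta_series G p Ns" "i \<le> j"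
  shows "Ns i \<subseteq> Ns j"
proof (rule lift_Suc_mono_le[OF _ assms(2)])
  show "Ns n \<subseteq> Ns (Suc n)" for n
    using assms(1) unfolding eta_series_def by blast
qed

lemma (in group) commutator_mem_eta_layer:
  assumes eta: "eta_series G p Ns" and "p \<noteq> 2" and N: "N \<lhd> G"
    and sub: "Ns (Suc i) \<subseteq> N"
    and a: "a \<in> Ns (Suc i) <#> power_sub G p N" and b: "b \<in> carrier G"
  shows "commutator G a b \<in> Ns i <#> power_sub G p N"
proof -
  interpret Np: normal "power_sub G p N" G
    using normal.power_sub_normal[OF N] .
  have layer: "Ns i \<lhd> G" "Ns (Suc i) \<lhd> G"
    "powerfully_embedded (G Mod Ns i) p ((#>) (Ns i) ` Ns (Suc i))"
    using eta unfolding eta_series_def by simp_all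
  interpret Ni: normal "Ns i" G by (fact layer(1))
  define M where "M = Ns i <#> power_sub G p N"
  have M: "subgroup M G"
    unfolding M_def by (rule mult_norm_subgroup[OF layer(1) Np.subgroup_axioms])
  have Np_M: "power_sub G p N \<subseteq> M"
    unfolding M_def by (intro subset_set_mult_left Ni.one_closed Np.subset)
  obtain v u where v: "v \<in> Ns (Suc i)" and u: "u \<in> power_sub G p N" and "a = v \<otimes> u"
    using a unfolding set_mult_def by blast
  have v_carrier: "v \<in> carrier G"
    using v layer(2) by (meson normal_imp_subgroup subgroup.mem_carrier)
  have "commutator G v b \<in> Ns i <#> power_sub G p (Ns (Suc i))"
    using layer v b \<open>p \<noteq> 2\<close> normal_imp_subgroup[OF layer(2)] subgroup.subset
    by (intro Ni.commutator_mem_of_powerfully_embedded) blast+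
  also have "\<dots> \<subseteq> M"
    unfolding M_def by (rule mono_set_mult[OF subset_refl power_sub_mono[OF sub]])
  finally have "commutator G v b \<in> M" .
  moreover have "commutator G u b \<in> M"
    using Np.commutator_closed u b Np_M by blast
  moreover have "u \<in> M" "inv u \<in> M"
    using u Np_M M subgroup.m_inv_closed by blast+
  ultimately have "commutator G a b \<in> M"
    using commutator_mult_left[OF v_carrier Np.subset[THEN subsetD, OF u] b] \<open>a = v \<otimes> u\<close> M
    by (simp add: subgroup.m_closed)
  then show ?thesis
    unfolding M_def .
qed

lemma (in group) comm_iter_subset_power_sub:
  assumes eta: "eta_series G p Ns" and "p \<noteq> 2" and N: "N \<lhd> G" and "Ns k = N"
  shows "comm_iter G N k \<subseteq> power_sub G p N"
proof -
  interpret Np: normal "power_sub G p N" G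
    using normal.power_sub_normal[OF N] .
  have descent: "comm_iter G N m \<subseteq> Ns (k - m) <#> power_sub G p N" if "m \<le> k" for m
    using that
  proof (induction m)
    case 0
    show ?case
      using \<open>Ns k = N\<close> normal_imp_subgroup[OF N]
      by (simp add: subset_set_mult_right subgroup.subset)
  next
    case (Suc m)
    have IH: "comm_iter G N m \<subseteq> Ns (Suc (k - Suc m)) <#> power_sub G p N"
      using Suc by (simp add: Suc_diff_Suc)
    have "Ns (Suc (k - Suc m)) \<subseteq> N"
      using eta_series_mono[OF eta, of "Suc (k - Suc m)" k] Suc.prems \<open>Ns k = N\<close> by simp
    moreover have "Ns (k - Suc m) \<lhd> G"
      using eta unfolding eta_series_def by simp
    ultimately show ?case
      using IH commutator_mem_eta_layer[OF eta \<open>p \<noteq> 2\<close> N]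
      by (simp, intro comm_sub_subset mult_norm_subgroup Np.subgroup_axioms) blast+
  qed
  have "Ns 0 <#> power_sub G p N = power_sub G p N"
    using eta Np.subset unfolding eta_series_def
    by (simp flip: l_coset_eq_set_mult add: lcos_mult_one)
  with descent[of k] show ?thesis
    by simp
qed

theorem lemma2p2:
  fixes P :: "('a, 'b) monoid_scheme" and p j :: nat and N :: "'a set"
  assumes "Factorial_Ring.prime p" and "odd p"
    and "finite_p_group P p"
    and "N \<lhd> P"
    and "j \<ge> 1"
    and "\<exists>k\<le>j. \<exists>Ns. eta_series P p Ns \<and> Ns k = N"
  shows "comm_iter P N j \<subseteq> power_sub P p N"
proof -
  obtain k Ns where "k \<le> j" "eta_series P p Ns" "Ns k = N"
    using assms(6) by blast
  interpret group P
    using assms(3) unfolding finite_p_group_def by blast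
  interpret Np: normal "power_sub P p N" P
    using normal.power_sub_normal[OF assms(4)] .
  have "p \<noteq> 2" using \<open>odd p\<close> by auto
  have "comm_iter P N k \<subseteq> power_sub P p N"
    by (rule comm_iter_subset_power_sub) fact+
  then have "comm_iter P N (k + (j - k)) \<subseteq> power_sub P p N"
    by (rule Np.comm_iter_subset)
  with \<open>k \<le> j\<close> show ?thesis by simp
qed

end
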